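(* Let $F\in\mathcal{Q}$ and define $\lambda=(\lambda_i)_{i\in\mathbb{Z}_{\ge0}}$ by $\lambda_i=2^{-F(i)}$. Let $k\in\mathbb{Z}_{\ge0}$, let $P_0,\dots,P_k$ be subsets of $\mathbb{Q}_{\ge0}$, and let $S\subseteq\mathbb{Q}_{\ge0}$. Assume there exist $a,b_0,\dots,b_k\in[0,\infty)$ such that (I) $a<b_i$ for all $i\in\{0,\dots,k\}$; (II) $b_i\neq b_j$ for $i\neq j$; (III) $S\cap P_i=[a,b_i)\cap\mathbb{Q}_{\ge0}$ for all $i\in\{0,\dots,k\}$. Then the $k+2$ real numbers $\langle\lambda,P_0\rangle,\dots,\langle\lambda,P_k\rangle,1$ are linearly independent over $\mathbb{Q}$.
   Context: Fix a bijection $Q\colon\mathbb{Z}_{\ge0}\to\mathbb{Q}_{\ge0}$. For a summable sequence $\alpha=(a_i)_{i\in\mathbb{Z}_{\ge0}}$ of positive reals and $B\subseteq\mathbb{Q}_{\ge0}$, put $\langle\alpha,B\rangle=\sum_{i:\,Q(i)\in B}a_i$, with $\langle\alpha,\emptyset\rangle=0$. $\mathcal{Q}$ denotes the set of all strictly increasing maps $F\colon\mathbb{Z}_{\ge0}\to\mathbb{Z}_{\ge0}$ such that $\lim_{n\to\infty}(F(n+1)-F(n))=\infty$ and $\lim_{n\to\infty}\sum_{m=n+1}^{\infty}2^{F(n)-F(m)}=0$. *)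

theory Defs
  imports "HOL-Analysis.Analysis"
begin

text \<open>The pairing of a summable sequence alpha with a set B of nonnegative rationals,
  relative to the fixed bijection Q from nat onto the nonnegative rationals.\<close>
definition pairing :: "(nat \<Rightarrow> rat) \<Rightarrow> (nat \<Rightarrow> real) \<Rightarrow> rat set \<Rightarrow> real" where
  "pairing Q \<alpha> B = (\<Sum>i. if Q i \<in> B then \<alpha> i else 0)"

definition classQ :: "(nat \<Rightarrow> nat) set" where
  "classQ = {F. strict_mono F
      \<and> filterlim (\<lambda>n. F (Suc n) - F n) at_top sequentially
      \<and> ((\<lambda>n. \<Sum>j. (2::real) powi (int (F n) - int (F (n + 1 + j)))) \<longlonglongrightarrow> 0)}"

definition rat_lin_indep :: "nat \<Rightarrow> (nat \<Rightarrow> real) \<Rightarrow> bool" where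
  "rat_lin_indep n x \<longleftrightarrow>
     (\<forall>c :: nat \<Rightarrow> rat. (\<Sum>i<n. of_rat (c i) * x i) = 0 \<longrightarrow> (\<forall>i<n. c i = 0))"

end

(*
  Clearing denominators turns a rational relation into an integer one,
  e_0 <lambda,P_0> + ... + e_k <lambda,P_k> + e_(k+1) = 0, which says that the bounded integer
  sequence w_j = (sum of the e_i with Q j in P_i) has sum_j w_j 2^(-F j) in Z.  Multiplying by
  2^(F n) and subtracting the integral head leaves an integer tail bounded by a multiple of
  sum_(m>n) 2^(F n - F m), which tends to 0; so the tails, and with them w, vanish eventually.
  Just below each b_i lie infinitely many rationals, all in S and in exactly those P_j with
  b_j >= b_i, so sum_(b_j >= b_i) e_j = 0 for every i; the b_i being distinct, this triangular
  system forces all e_i = 0.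
*)

theory Submission
  imports Defs
begin

lemma rat_lin_indep_if_int_lin_indep:
  assumes int_indep: "\<And>e :: nat \<Rightarrow> int. (\<Sum>i<n. of_int (e i) * x i) = 0 \<Longrightarrow> \<forall>i<n. e i = 0"
  shows "rat_lin_indep n x"
  unfolding rat_lin_indep_def
proof (intro allI impI)
  fix c :: "nat \<Rightarrow> rat" and i
  assume c: "(\<Sum>i<n. of_rat (c i) * x i) = 0" and "i < n"
  define d where "d i = snd (quotient_of (c i))" for i
  define D where "D = (\<Prod>i<n. d i)"
  define e where "e i = fst (quotient_of (c i)) * (\<Prod>j\<in>{..<n} - {i}. d j)" for i
  have d_pos: "d i > 0" for i
    using quotient_of_denom_pos' by (simp add: d_def)
  have D_pos: "D > 0"
    unfolding D_def using d_pos by (simp add: prod_pos)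
  have c_eq: "c i = of_int (fst (quotient_of (c i))) / of_int (d i)" for i
    using quotient_of_div[of "c i"] by (simp add: d_def)
  have e_eq: "of_int (e j) = of_int D * c j" if "j < n" for j
  proof -
    have "D = d j * (\<Prod>j'\<in>{..<n} - {j}. d j')"
      using that by (simp add: D_def prod.remove)
    then show ?thesis
      using d_pos[of j] by (subst c_eq) (simp add: e_def field_simps)
  qed
  have e_real: "(of_int (e j) :: real) = of_int D * of_rat (c j)" if "j < n" for j
    using arg_cong[OF e_eq[OF that], of of_rat] by (simp add: of_rat_mult)
  have "(\<Sum>i<n. of_int (e i) * x i) = of_int D * (\<Sum>i<n. of_rat (c i) * x i)"
    unfolding sum_distrib_left by (rule sum.cong) (simp_all add: e_real)
  then have "\<forall>i<n. e i = 0"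
    using c by (intro int_indep) simp
  then show "c i = 0"
    using e_eq[OF \<open>i < n\<close>] D_pos \<open>i < n\<close> by simp
qed

lemma eq_0_if_upper_sums_eq_0:
  fixes b :: "'a \<Rightarrow> 'b::linorder" and e :: "'a \<Rightarrow> 'c::comm_monoid_add"
  assumes "finite I" and "inj_on b I"
    and upper_sums: "\<And>i. i \<in> I \<Longrightarrow> (\<Sum>j\<in>{j\<in>I. b i \<le> b j}. e j) = 0"
    and "i \<in> I"
  shows "e i = 0"
proof (rule ccontr)
  define N where "N = {j\<in>I. e j \<noteq> 0}"
  assume "e i \<noteq> 0"
  then have "N \<noteq> {}" and "finite N"
    using assms(1,4) by (auto simp: N_def)
  then obtain m where m: "m \<in> N" "b m = Max (b ` N)"
    by (metis (no_types, lifting) Max_in finite_imageI image_iff image_is_empty)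
  have "e j = 0" if "j \<in> I" "b m < b j" for j
  proof (rule ccontr)
    assume "e j \<noteq> 0"
    then have "b j \<le> b m"
      using that(1) m(2) \<open>finite N\<close> by (simp add: N_def)
    then show False
      using that(2) by simp
  qed
  moreover have "m \<in> I"
    using m(1) by (simp add: N_def)
  then have "{j\<in>I. b m \<le> b j} = insert m {j\<in>I. b m < b j}"
    using inj_onD[OF \<open>inj_on b I\<close>] by (auto simp: order_le_less)
  ultimately have "(\<Sum>j\<in>{j\<in>I. b m \<le> b j}. e j) = e m"
    using assms(1) by (simp add: sum.neutral)
  then show False
    using upper_sums[OF \<open>m \<in> I\<close>] m(1) by (simp add: N_def)
qed

lemma infinite_rats_between:
  fixes lo hi :: real
  assumes "lo < hi"
  shows "infinite {q :: rat. lo < of_rat q \<and> of_rat q < hi}"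
proof -
  obtain r1 where r1: "lo < of_rat r1" "of_rat r1 < hi"
    using of_rat_dense[OF assms] by blast
  obtain r2 where r2: "r1 < r2" "of_rat r2 < hi"
    using of_rat_dense[OF r1(2)] by (auto simp: of_rat_less)
  have "{r1<..<r2} \<subseteq> {q. lo < of_rat q \<and> of_rat q < hi}"
  proof
    fix q
    assume "q \<in> {r1<..<r2}"
    then have "of_rat r1 < (of_rat q :: real)" "(of_rat q :: real) < of_rat r2"
      by (simp_all add: of_rat_less)
    then show "q \<in> {q. lo < of_rat q \<and> of_rat q < hi}"
      using r1(1) r2(2) by simp
  qed
  moreover have "infinite {r1<..<r2}"
    using r2(1) by simp
  ultimately show ?thesis
    using finite_subset by blast
qed

lemma frequently_upper_membership_pattern:
  fixes a :: real and k :: nat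
  assumes Q: "{q. q \<ge> 0} \<subseteq> range Q"
    and a: "a \<ge> 0" and "i \<le> k" and a_less: "a < b i"
    and intervals: "\<And>j. j \<le> k \<Longrightarrow>
              S \<inter> P j = {q. q \<ge> 0 \<and> a \<le> of_rat q \<and> of_rat q < b j}"
  shows "\<exists>\<^sub>F n in sequentially. \<forall>j\<le>k. Q n \<in> P j \<longleftrightarrow> b i \<le> b j"
  unfolding cofinite_eq_sequentially[symmetric] frequently_cofinite
proof -
  \<comment> \<open>Rationals in the interval (lo, b i) lie in S and in P j exactly when b i \<le> b j.\<close>
  define lo where "lo = Max (insert a (b ` {j. j \<le> k \<and> b j < b i}))"
  have fin: "finite (insert a (b ` {j. j \<le> k \<and> b j < b i}))"
    by simp
  have lo_less: "lo < b i" and a_le: "a \<le> lo" and below_le: "\<And>j. j \<le> k \<Longrightarrow> b j < b i \<Longrightarrow> b j \<le> lo"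
    using fin a_less by (auto simp: lo_def Max_less_iff intro: Max_ge)
  define G where "G = {q :: rat. lo < of_rat q \<and> of_rat q < b i}"
  have pattern: "\<forall>j\<le>k. q \<in> P j \<longleftrightarrow> b i \<le> b j" and nonneg: "q \<ge> 0" if "q \<in> G" for q
  proof -
    have q: "a \<le> of_rat q" "of_rat q < b i"
      using that a_le by (auto simp: G_def)
    then show "q \<ge> 0"
      using a by (metis of_rat_less_eq of_rat_0 order_trans)
    then have "q \<in> S"
      using intervals[OF \<open>i \<le> k\<close>] q by blast
    have "q \<in> P j \<longleftrightarrow> of_rat q < b j" if "j \<le> k" for j
      using intervals[OF that] \<open>q \<in> S\<close> \<open>q \<ge> 0\<close> q by blast
    moreover have "of_rat q < b j \<longleftrightarrow> b i \<le> b j" if "j \<le> k" for j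
      using below_le[OF that] q \<open>q \<in> G\<close> by (force simp: G_def)
    ultimately show "\<forall>j\<le>k. q \<in> P j \<longleftrightarrow> b i \<le> b j"
      by blast
  qed
  have "G \<subseteq> Q ` (Q -` G)"
  proof
    fix q
    assume "q \<in> G"
    then obtain n where "q = Q n"
      using Q nonneg by blast
    then show "q \<in> Q ` (Q -` G)"
      using \<open>q \<in> G\<close> by blast
  qed
  moreover have "infinite G"
    unfolding G_def using infinite_rats_between[OF lo_less] .
  ultimately have "infinite (Q -` G)"
    using finite_surj by blast
  moreover have "Q -` G \<subseteq> {n. \<forall>j\<le>k. Q n \<in> P j \<longleftrightarrow> b i \<le> b j}"
    using pattern by blast
  ultimately show "infinite {n. \<forall>j\<le>k. Q n \<in> P j \<longleftrightarrow> b i \<le> b j}"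
    using finite_subset by blast
qed

lemma summable_divide_pow2_strict_mono:
  fixes w :: "nat \<Rightarrow> real"
  assumes "strict_mono F" and "\<And>j. \<bar>w j\<bar> \<le> W"
  shows "summable (\<lambda>j. w j / 2 ^ F j)"
proof (rule summable_comparison_test)
  show "\<exists>N. \<forall>j\<ge>N. norm (w j / 2 ^ F j) \<le> W * (1/2) ^ j"
  proof (intro exI[of _ 0] allI impI)
    fix j
    have "(2::real) ^ j \<le> 2 ^ F j"
      using seq_suble[OF assms(1)] by (intro power_increasing) auto
    then have "\<bar>w j\<bar> / 2 ^ F j \<le> W / 2 ^ j"
      using assms(2)[of j] by (intro frac_le) (auto intro: order_trans[OF abs_ge_zero])
    then show "norm (w j / 2 ^ F j) \<le> W * (1/2) ^ j"
      by (simp add: power_one_over abs_divide field_simps)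
  qed
  show "summable (\<lambda>j. W * (1/2::real) ^ j)"
    by (intro summable_mult summable_geometric) auto
qed

lemma scaled_tail_bound:
  fixes w :: "nat \<Rightarrow> real"
  assumes mono: "strict_mono F" and bound: "\<And>j. \<bar>w j\<bar> \<le> W"
  shows "\<bar>2 ^ F n * (\<Sum>m. w (m + Suc n) / 2 ^ F (m + Suc n))\<bar>
           \<le> W * (\<Sum>m. 2 powi (int (F n) - int (F (n + 1 + m))))"
proof -
  have "summable (\<lambda>j. \<bar>w j\<bar> / 2 ^ F j)"
    using summable_divide_pow2_strict_mono[OF mono, of "\<lambda>j. \<bar>w j\<bar>" W] bound by simp
  then have abs_summable: "summable (\<lambda>m. \<bar>w (m + Suc n) / 2 ^ F (m + Suc n)\<bar>)"
    using summable_iff_shift[of "\<lambda>j. \<bar>w j\<bar> / 2 ^ F j" "Suc n"] by (simp add: abs_divide)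
  have "summable (\<lambda>j. 1 / 2 ^ F j :: real)"
    using summable_divide_pow2_strict_mono[OF mono, of "\<lambda>_. 1" 1] by simp
  then have inv_summable: "summable (\<lambda>m. 1 / 2 ^ F (m + Suc n) :: real)"
    by (rule summable_iff_shift[of "\<lambda>j. 1 / 2 ^ F j", THEN iffD2])
  have term_bound: "\<bar>w (m + Suc n) / 2 ^ F (m + Suc n)\<bar> \<le> W * (1 / 2 ^ F (m + Suc n))" for m
    using bound[of "m + Suc n"] by (simp add: abs_divide divide_right_mono)
  have "\<bar>\<Sum>m. w (m + Suc n) / 2 ^ F (m + Suc n)\<bar> \<le> (\<Sum>m. W * (1 / 2 ^ F (m + Suc n)))"
    using summable_rabs[OF abs_summable]
      suminf_le[OF term_bound abs_summable summable_mult[OF inv_summable]]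
    by (rule order_trans)
  then have "\<bar>\<Sum>m. w (m + Suc n) / 2 ^ F (m + Suc n)\<bar> \<le> W * (\<Sum>m. 1 / 2 ^ F (m + Suc n))"
    by (simp only: suminf_mult[OF inv_summable])
  then have "\<bar>2 ^ F n * (\<Sum>m. w (m + Suc n) / 2 ^ F (m + Suc n))\<bar>
      \<le> 2 ^ F n * (W * (\<Sum>m. 1 / 2 ^ F (m + Suc n)))"
    unfolding abs_mult by (simp add: mult_left_mono)
  also have "\<dots> = W * (\<Sum>m. 2 ^ F n * (1 / 2 ^ F (m + Suc n)))"
    using suminf_mult[OF inv_summable, of "2 ^ F n"] by simp
  also have "\<dots> = W * (\<Sum>m. 2 powi (int (F n) - int (F (n + 1 + m))))"
    by (simp add: power_int_diff add_ac)
  finally show ?thesis .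
qed

lemma lacunary_integer_sum_eventually_zero:
  fixes w :: "nat \<Rightarrow> int"
  assumes F: "F \<in> classQ"
    and bound: "\<And>j. \<bar>w j\<bar> \<le> W"
    and integer: "(\<Sum>j. of_int (w j) / 2 ^ F j :: real) \<in> \<int>"
  shows "\<forall>\<^sub>F j in sequentially. w j = 0"
proof -
  have mono: "strict_mono F"
    and tails: "(\<lambda>n. \<Sum>m. (2::real) powi (int (F n) - int (F (n + 1 + m)))) \<longlonglongrightarrow> 0"
    using F by (auto simp: classQ_def)
  define s where "s j = (of_int (w j) / 2 ^ F j :: real)" for j
  have bound': "\<bar>of_int (w j)\<bar> \<le> (of_int W :: real)" for j
    using bound[of j] by linarith
  have summable_s: "summable s"
    unfolding s_def using summable_divide_pow2_strict_mono[OF mono bound'] .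
  \<comment> \<open>The scaled tail: an integer, and eventually of absolute value below 1.\<close>
  define R where "R n = 2 ^ F n * (\<Sum>m. s (m + Suc n))" for n
  have R_integer: "R n \<in> \<int>" for n
  proof -
    have "R n = 2 ^ F n * suminf s - (\<Sum>j<Suc n. 2 ^ F n * s j)"
      using suminf_split_initial_segment[OF summable_s, of "Suc n"]
      by (simp add: R_def sum_distrib_left sum_distrib_right algebra_simps)
    also have "(\<Sum>j<Suc n. 2 ^ F n * s j) = (\<Sum>j<Suc n. of_int (w j) * 2 ^ (F n - F j))"
      using mono by (intro sum.cong) (auto simp: s_def power_diff strict_mono_less_eq)
    also have "2 ^ F n * suminf s - \<dots> \<in> \<int>"
      using integer unfolding s_def by (intro Ints_diff Ints_mult Ints_sum Ints_power) auto
    finally show ?thesis .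
  qed
  have R_bound: "\<bar>R n\<bar> \<le> of_int W * (\<Sum>m. 2 powi (int (F n) - int (F (n + 1 + m))))" for n
    unfolding R_def s_def using scaled_tail_bound[OF mono bound'] .
  have R_zero_if: "R n = 0" if "of_int W * (\<Sum>m. (2::real) powi (int (F n) - int (F (n + 1 + m)))) < 1" for n
    using Ints_nonzero_abs_less1[OF R_integer[of n]] R_bound[of n] that by linarith
  have "\<forall>\<^sub>F n in sequentially. of_int W * (\<Sum>m. (2::real) powi (int (F n) - int (F (n + 1 + m)))) < 1"
    using tendsto_mult_right_zero[OF tails, of "of_int W"] by (intro order_tendstoD) auto
  then have R_zero: "\<forall>\<^sub>F n in sequentially. R n = 0"
    by (rule eventually_mono) (rule R_zero_if)
  have R_step: "R n = 2 ^ F n * s (Suc n) + 2 ^ F n / 2 ^ F (Suc n) * R (Suc n)" for n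
  proof -
    have "summable (\<lambda>m. s (m + Suc n))"
      using summable_s by (rule summable_iff_shift[THEN iffD2])
    then have "(\<Sum>m. s (m + Suc n)) = s (Suc n) + (\<Sum>m. s (m + Suc (Suc n)))"
      using suminf_split_head by fastforce
    then show ?thesis
      by (simp add: R_def field_simps)
  qed
  have w_zero_if: "w (Suc n) = 0" if "R n = 0 \<and> R (Suc n) = 0" for n
    using R_step[of n] that by (simp add: s_def)
  have "\<forall>\<^sub>F n in sequentially. w (Suc n) = 0"
    using eventually_conj[OF R_zero eventually_sequentially_Suc[of "\<lambda>n. R n = 0", THEN iffD2, OF R_zero]]
    by (rule eventually_mono) (rule w_zero_if)
  then show ?thesis using eventually_sequentially_Suc[of "\<lambda>j. w j = 0"] by simp
qed

lemma lincomb_pairing_pow2: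
  fixes e :: "nat \<Rightarrow> int"
  assumes "strict_mono F" and "finite I"
  shows "(\<Sum>i\<in>I. of_int (e i) * pairing Q (\<lambda>j. 2 powi (- int (F j))) (P i))
       = (\<Sum>j. of_int (\<Sum>i\<in>I. if Q j \<in> P i then e i else 0) / 2 ^ F j)"
proof -
  define ind where "ind i j = (if Q j \<in> P i then 1 else 0 :: real)" for i j
  have pairing_eq: "pairing Q (\<lambda>j. 2 powi (- int (F j))) (P i) = (\<Sum>j. ind i j / 2 ^ F j)" for i
    unfolding pairing_def ind_def by (rule suminf_cong) (simp add: power_int_minus_divide)
  have summable_ind: "summable (\<lambda>j. ind i j / 2 ^ F j)" for i
    using summable_divide_pow2_strict_mono[OF assms(1), of "ind i" 1] by (simp add: ind_def)
  then have summable: "summable (\<lambda>j. of_int (e i) * (ind i j / 2 ^ F j))" for i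
    by (rule summable_mult)
  have "(\<Sum>i\<in>I. of_int (e i) * pairing Q (\<lambda>j. 2 powi (- int (F j))) (P i))
      = (\<Sum>i\<in>I. \<Sum>j. of_int (e i) * (ind i j / 2 ^ F j))"
    by (simp only: pairing_eq suminf_mult[OF summable_ind, symmetric])
  also have "\<dots> = (\<Sum>j. \<Sum>i\<in>I. of_int (e i) * (ind i j / 2 ^ F j))"
    using summable by (rule suminf_sum[symmetric])
  also have "\<dots> = (\<Sum>j. of_int (\<Sum>i\<in>I. if Q j \<in> P i then e i else 0) / 2 ^ F j)"
    by (rule suminf_cong) (auto simp: ind_def of_int_sum sum_divide_distrib intro!: sum.cong)
  finally show ?thesis .
qed

lemma eventually_zero_if_pairing_lincomb_in_Ints:
  fixes e :: "nat \<Rightarrow> int"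
  assumes F: "F \<in> classQ" and "finite I"
    and "(\<Sum>i\<in>I. of_int (e i) * pairing Q (\<lambda>j. 2 powi (- int (F j))) (P i)) \<in> \<int>"
  shows "\<forall>\<^sub>F j in sequentially. (\<Sum>i\<in>I. if Q j \<in> P i then e i else 0) = 0"
proof (rule lacunary_integer_sum_eventually_zero[OF F])
  show "\<bar>\<Sum>i\<in>I. if Q j \<in> P i then e i else 0\<bar> \<le> (\<Sum>i\<in>I. \<bar>e i\<bar>)" for j
    by (rule order_trans[OF sum_abs]) (intro sum_mono, auto)
  show "(\<Sum>j. of_int (\<Sum>i\<in>I. if Q j \<in> P i then e i else 0) / 2 ^ F j :: real) \<in> \<int>"
    using assms lincomb_pairing_pow2[of F I e Q P] by (simp add: classQ_def)
qed

theorem proposition3p3: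
  fixes Q :: "nat \<Rightarrow> rat" and F :: "nat \<Rightarrow> nat" and k :: nat
    and P :: "nat \<Rightarrow> rat set" and S :: "rat set"
    and a :: real and b :: "nat \<Rightarrow> real"
  assumes Q: "bij_betw Q UNIV {q. q \<ge> 0}"
    and F: "F \<in> classQ"
    and P: "\<And>i. i \<le> k \<Longrightarrow> P i \<subseteq> {q. q \<ge> 0}"
    and S: "S \<subseteq> {q. q \<ge> 0}"
    and a: "a \<ge> 0" and b: "\<And>i. i \<le> k \<Longrightarrow> b i \<ge> 0"
    and I: "\<And>i. i \<le> k \<Longrightarrow> a < b i"
    and II: "\<And>i j. i \<le> k \<Longrightarrow> j \<le> k \<Longrightarrow> i \<noteq> j \<Longrightarrow> b i \<noteq> b j"
    and III: "\<And>i. i \<le> k \<Longrightarrow>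
              S \<inter> P i = {q. q \<ge> 0 \<and> a \<le> of_rat q \<and> of_rat q < b i}"
  shows "rat_lin_indep (k + 2)
           (\<lambda>i. if i \<le> k then pairing Q (\<lambda>j. 2 powi (- int (F j))) (P i) else 1)"
proof (rule rat_lin_indep_if_int_lin_indep)
  fix e :: "nat \<Rightarrow> int"
  let ?head = "\<Sum>i\<le>k. of_int (e i) * pairing Q (\<lambda>j. 2 powi (- int (F j))) (P i)"
  assume "(\<Sum>i<k + 2. of_int (e i) *
      (if i \<le> k then pairing Q (\<lambda>j. 2 powi (- int (F j))) (P i) else 1)) = 0"
  then have comb: "?head + of_int (e (k + 1)) = 0"
    by (simp add: lessThan_Suc_atMost)
  then have "?head = of_int (- e (k + 1))"
    by (simp add: eq_neg_iff_add_eq_0)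
  then have "?head \<in> \<int>"
    by simp
  then have w_zero: "\<forall>\<^sub>F n in sequentially. (\<Sum>j\<le>k. if Q n \<in> P j then e j else 0) = 0"
    by (rule eventually_zero_if_pairing_lincomb_in_Ints[OF F finite_atMost])
  have upper_sums: "(\<Sum>j\<in>{j\<in>{..k}. b i \<le> b j}. e j) = 0" if i: "i \<le> k" for i
  proof -
    have "{q. q \<ge> 0} \<subseteq> range Q"
      using Q by (simp add: bij_betw_def)
    from frequently_upper_membership_pattern[of Q a i k b S P, OF this a i I[OF i] III]
    obtain n where n: "\<forall>j\<le>k. Q n \<in> P j \<longleftrightarrow> b i \<le> b j"
      and w_n: "(\<Sum>j\<le>k. if Q n \<in> P j then e j else 0) = 0"
      using frequently_ex[OF frequently_eventually_frequently[OF _ w_zero]] by blast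
    have "(\<Sum>j\<in>{j\<in>{..k}. b i \<le> b j}. e j) = (\<Sum>j\<le>k. if Q n \<in> P j then e j else 0)"
      unfolding sum.inter_filter[OF finite_atMost] using n by (intro sum.cong) auto
    with w_n show ?thesis
      by simp
  qed
  have "inj_on b {..k}"
    using II by (auto simp: inj_on_def)
  then have e_low: "e i = 0" if "i \<le> k" for i
    using eq_0_if_upper_sums_eq_0[OF finite_atMost, of b k e i] upper_sums that by simp
  then have "?head = 0"
    by (intro sum.neutral) simp
  then have e_top: "e (k + 1) = 0"
    using comb by simp
  show "\<forall>i<k + 2. e i = 0"
  proof (intro allI impI)
    fix i
    assume "i < k + 2"
    then consider "i \<le> k" | "i = k + 1"
      by linarith
    then show "e i = 0"
      using e_low e_top by cases auto
  qed
qed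

end
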